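(* Assume the two-group Curie–Weiss model described in the context, with $\alpha_1>0$, $\alpha_2>0$, and assume the high temperature regime: $J_1<\frac{1}{\alpha_1}$, $J_2<\frac{1}{\alpha_2}$ and $\bar J^2<\big(\frac{1}{\alpha_1}-J_1\big)\big(\frac{1}{\alpha_2}-J_2\big)$. Then \[ \Big(\frac{1}{N_1}\sum_{i=1}^{N_1}X_i,\ \frac{1}{N_2}\sum_{j=1}^{N_2}Y_j\Big)\Longrightarrow (0,0)\qquad (N\to\infty), \] where $\Longrightarrow$ denotes convergence in distribution of $\mathbb R^2$-valued random variables.
   Context: Two-group Curie–Weiss model: for each $N\in\mathbb N$ let $N_1=N_1(N)$, $N_2=N_2(N)$ be positive integers with $N_1+N_2\le N$, $N_1,N_2\to\infty$, and such that the limits $\alpha_1=\lim_{N\to\infty}N_1/N$, $\alpha_2=\lim_{N\to\infty}N_2/N$ exist. The coupling matrix is $J=\begin{pmatrix}J_1&\bar J\\ \bar J&J_2\end{pmatrix}$ with $J_1,J_2,\bar J>0$ and $\Delta:=J_1J_2-\bar J^2>0$ (so $J$ is positive definite). The spins $X_1,\dots,X_{N_1},Y_1,\dots,Y_{N_2}$ take values in $\{-1,1\}$ and have joint law \[ \mathbb P(X=x,Y=y)=Z^{-1}\exp\Big(\frac{1}{2N}\Big[J_1\Big(\sum_{i=1}^{N_1}x_i\Big)^2+J_2\Big(\sum_{j=1}^{N_2}y_j\Big)^2+2\bar J\Big(\sum_{i=1}^{N_1}x_i\Big)\Big(\sum_{j=1}^{N_2}y_j\Big)\Big]\Big), \] where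 $Z$ is the normalising constant (depending on $N$). *)

theory Defs
  imports "HOL-Probability.Probability"
begin

text \<open>Spin configurations of a group of size n: functions on {0..<n} with values in {-1,1}
  (extended by undefined outside, as in PiE).\<close>
definition spins :: "nat \<Rightarrow> (nat \<Rightarrow> real) set" where
  "spins n = PiE {..<n} (\<lambda>_. {-1, 1})"

definition cw_weight :: "real \<Rightarrow> real \<Rightarrow> real \<Rightarrow> nat \<Rightarrow> nat \<Rightarrow> nat
    \<Rightarrow> (nat \<Rightarrow> real) \<times> (nat \<Rightarrow> real) \<Rightarrow> real" where
  "cw_weight J1 J2 Jb N N1 N2 xy =
     (let S1 = (\<Sum>i<N1. fst xy i); S2 = (\<Sum>j<N2. snd xy j) in
      exp ((J1 * S1\<^sup>2 + J2 * S2\<^sup>2 + 2 * Jb * S1 * S2) / (2 * real N)))"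

definition cw_Z :: "real \<Rightarrow> real \<Rightarrow> real \<Rightarrow> nat \<Rightarrow> nat \<Rightarrow> nat \<Rightarrow> real" where
  "cw_Z J1 J2 Jb N N1 N2 = (\<Sum>xy \<in> spins N1 \<times> spins N2. cw_weight J1 J2 Jb N N1 N2 xy)"

definition cw_pmf :: "real \<Rightarrow> real \<Rightarrow> real \<Rightarrow> nat \<Rightarrow> nat \<Rightarrow> nat
    \<Rightarrow> ((nat \<Rightarrow> real) \<times> (nat \<Rightarrow> real)) pmf" where
  "cw_pmf J1 J2 Jb N N1 N2 = embed_pmf (\<lambda>xy.
     if xy \<in> spins N1 \<times> spins N2
     then cw_weight J1 J2 Jb N N1 N2 xy / cw_Z J1 J2 Jb N N1 N2 else 0)"

definition cw_magn_law :: "real \<Rightarrow> real \<Rightarrow> real \<Rightarrow> nat \<Rightarrow> nat \<Rightarrow> nat \<Rightarrow> (real \<times> real) pmf" where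
  "cw_magn_law J1 J2 Jb N N1 N2 =
     map_pmf (\<lambda>(x, y). ((\<Sum>i<N1. x i) / real N1, (\<Sum>j<N2. y j) / real N2))
       (cw_pmf J1 J2 Jb N N1 N2)"

definition weak_conv_R2 :: "(nat \<Rightarrow> (real \<times> real) measure) \<Rightarrow> (real \<times> real) measure \<Rightarrow> bool" where
  "weak_conv_R2 M_seq M \<longleftrightarrow>
     (\<forall>f :: real \<times> real \<Rightarrow> real. continuous_on UNIV f \<and> bounded (range f) \<longrightarrow>
        (\<lambda>n. integral\<^sup>L (M_seq n) f) \<longlonglongrightarrow> integral\<^sup>L M f)"

end

theory Submission
  imports Defs "HOL-Real_Asymp.Real_Asymp"
begin

text \<open>A Chernoff bound shows that at most 2^n exp(-s^2/(2n)) spin configurations of a group of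
  size n have total spin s. Hence the unnormalised weight of the configurations whose group spins
  (S1, S2) lie far from the origin is at most 2^(n1+n2) times a sum of O(N^2) terms
  exp(-(N/2) q(S1/N, S2/N)), where q(u, v) = (N/n1 - J1) u^2 + (N/n2 - J2) v^2 - 2 Jb u v.
  In the high temperature regime q is uniformly positive definite for large N, while
  Z \<ge> 2^(n1+n2) because J is positive definite. So the magnetisations concentrate at the origin
  exponentially fast, which gives weak convergence to the point mass.\<close>

lemma cosh_le_exp_square_half: "cosh (l::real) \<le> exp (l\<^sup>2 / 2)"
proof -
  have "cosh l \<le> exp (l\<^sup>2 / 2)" if "l \<ge> 0" for l :: real
  proof -
    have hoeffding: "- (2 * l) * (1/2) + ln (1 + (1/2) * (exp (2 * l) - 1)) \<le> (2 * l)\<^sup>2 / 8"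
      by (rule Hoeffdings_lemma_aux) (use that in auto)
    have "1 + (1/2) * (exp (2 * l) - 1) = exp l * cosh l"
      by (simp add: cosh_field_def exp_minus field_simps flip: exp_add)
    then have "ln (cosh l) \<le> l\<^sup>2 / 2"
      using hoeffding by (simp add: ln_mult power2_eq_square)
    then show ?thesis
      by (metis cosh_real_pos exp_le_cancel_iff exp_ln)
  qed
  from this[of "\<bar>l\<bar>"] show ?thesis by simp
qed

lemma finite_spins [simp]: "finite (spins n)"
  unfolding spins_def by (auto intro: finite_PiE)

lemma card_spins: "card (spins n) = 2 ^ n"
  unfolding spins_def by (simp add: card_PiE numeral_2_eq_2)

lemma spins_nonempty [simp]: "spins n \<noteq> {}"
  using card_spins[of n] by auto

lemma sum_exp_spin_sum: "(\<Sum>x\<in>spins n. exp (l * (\<Sum>i<n. x i))) = (2 * cosh l) ^ n"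
proof -
  have "(\<Sum>x\<in>spins n. exp (l * (\<Sum>i<n. x i))) = (\<Sum>x\<in>spins n. \<Prod>i<n. exp (l * x i))"
    by (simp add: sum_distrib_left exp_sum)
  also have "\<dots> = (\<Prod>i<n. \<Sum>y\<in>{-1, 1::real}. exp (l * y))"
    unfolding spins_def by (rule prod_sum_PiE[symmetric]) auto
  also have "\<dots> = (2 * cosh l) ^ n"
    by (simp flip: cosh_plus_sinh cosh_minus_sinh)
  finally show ?thesis .
qed

text \<open>Chernoff's bound with the optimal exponent l = s/n.\<close>
lemma card_spins_with_sum_le:
  assumes "n > 0"
  shows "real (card {x\<in>spins n. (\<Sum>i<n. x i) = s}) \<le> 2 ^ n * exp (- s\<^sup>2 / (2 * n))"
proof -
  define l where "l = s / n"
  let ?F = "{x\<in>spins n. (\<Sum>i<n. x i) = s}"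
  have "real (card ?F) * exp (l * s) = (\<Sum>x\<in>?F. exp (l * (\<Sum>i<n. x i)))"
    by simp
  also have "\<dots> \<le> (\<Sum>x\<in>spins n. exp (l * (\<Sum>i<n. x i)))"
    by (rule sum_mono2) auto
  also have "\<dots> = (2 * cosh l) ^ n"
    by (rule sum_exp_spin_sum)
  also have "\<dots> \<le> (2 * exp (l\<^sup>2 / 2)) ^ n"
    by (intro power_mono) (auto simp: cosh_le_exp_square_half)
  also have "\<dots> = 2 ^ n * exp (n * (l\<^sup>2 / 2))"
    by (simp add: power_mult_distrib exp_of_nat_mult[symmetric])
  finally have "real (card ?F) \<le> 2 ^ n * exp (n * (l\<^sup>2 / 2)) / exp (l * s)"
    by (simp add: field_simps)
  also have "\<dots> = 2 ^ n * exp (n * (l\<^sup>2 / 2) - l * s)"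
    by (simp add: exp_diff)
  also have "n * (l\<^sup>2 / 2) - l * s = - s\<^sup>2 / (2 * n)"
    using assms by (simp add: l_def field_simps power2_eq_square)
  finally show ?thesis .
qed

lemma spin_sum_in_range:
  assumes "x \<in> spins n"
  shows "(\<Sum>i<n. x i) \<in> of_int ` {- int n..int n}"
proof -
  define k where "k = (\<Sum>i<n. if x i = 1 then 1 else -1 :: int)"
  have "(\<Sum>i<n. x i) = of_int k"
    unfolding k_def of_int_sum
    by (rule sum.cong) (use assms in \<open>auto simp: spins_def PiE_iff\<close>)
  moreover have "\<bar>k\<bar> \<le> int n"
  proof -
    have "\<bar>k\<bar> \<le> (\<Sum>i<n. \<bar>if x i = 1 then 1 else -1 :: int\<bar>)"
      unfolding k_def by (rule sum_abs)
    also have "\<dots> = (\<Sum>i<n. 1)" by (intro sum.cong) auto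
    finally show ?thesis by simp
  qed
  ultimately show ?thesis by (auto simp: abs_le_iff)
qed

lemma sum_spins_le:
  assumes "n > 0" and "\<And>s. g s \<ge> 0"
  shows "(\<Sum>x\<in>spins n. g (\<Sum>i<n. x i)) \<le>
     2 ^ n * (\<Sum>k = - int n..int n. exp (- (of_int k)\<^sup>2 / (2 * n)) * g (of_int k))"
proof -
  let ?T = "(of_int ` {- int n..int n}) :: real set"
  have "(\<Sum>x\<in>spins n. g (\<Sum>i<n. x i)) =
        (\<Sum>s\<in>?T. \<Sum>x\<in>{x\<in>spins n. (\<Sum>i<n. x i) = s}. g (\<Sum>i<n. x i))"
    by (rule sum.group[symmetric]) (auto simp: spin_sum_in_range)
  also have "\<dots> = (\<Sum>s\<in>?T. real (card {x\<in>spins n. (\<Sum>i<n. x i) = s}) * g s)"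
    by simp
  also have "\<dots> \<le> (\<Sum>s\<in>?T. 2 ^ n * exp (- s\<^sup>2 / (2 * n)) * g s)"
    by (intro sum_mono mult_right_mono card_spins_with_sum_le assms)
  also have "\<dots> = 2 ^ n * (\<Sum>k = - int n..int n. exp (- (of_int k)\<^sup>2 / (2 * n)) * g (of_int k))"
    by (subst sum.reindex) (auto simp: inj_on_def sum_distrib_left mult.assoc)
  finally show ?thesis .
qed

lemma sum_spins_pair_le:
  assumes "n1 > 0" "n2 > 0" and "\<And>s t. H s t \<ge> 0"
  shows "(\<Sum>xy\<in>spins n1 \<times> spins n2. H (\<Sum>i<n1. fst xy i) (\<Sum>j<n2. snd xy j)) \<le>
     2 ^ n1 * 2 ^ n2 * (\<Sum>j = - int n1..int n1. \<Sum>k = - int n2..int n2.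
        exp (- (of_int j)\<^sup>2 / (2 * n1)) * exp (- (of_int k)\<^sup>2 / (2 * n2)) * H (of_int j) (of_int k))"
proof -
  let ?e1 = "\<lambda>j::int. exp (- (of_int j)\<^sup>2 / (2 * n1)) :: real"
  let ?e2 = "\<lambda>k::int. exp (- (of_int k)\<^sup>2 / (2 * n2)) :: real"
  have "(\<Sum>xy\<in>spins n1 \<times> spins n2. H (\<Sum>i<n1. fst xy i) (\<Sum>j<n2. snd xy j)) =
        (\<Sum>x\<in>spins n1. \<Sum>y\<in>spins n2. H (\<Sum>i<n1. x i) (\<Sum>j<n2. y j))"
    by (simp add: sum.cartesian_product case_prod_unfold)
  also have "\<dots> \<le> (\<Sum>x\<in>spins n1. 2 ^ n2 * (\<Sum>k = - int n2..int n2. ?e2 k * H (\<Sum>i<n1. x i) (of_int k)))"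
    by (intro sum_mono sum_spins_le assms)
  also have "\<dots> = 2 ^ n2 * (\<Sum>k = - int n2..int n2. ?e2 k * (\<Sum>x\<in>spins n1. H (\<Sum>i<n1. x i) (of_int k)))"
    by (simp add: sum_distrib_left sum.swap[of _ "spins n1"] mult.assoc)
  also have "\<dots> \<le> 2 ^ n2 * (\<Sum>k = - int n2..int n2. ?e2 k *
                  (2 ^ n1 * (\<Sum>j = - int n1..int n1. ?e1 j * H (of_int j) (of_int k))))"
    by (intro mult_left_mono sum_mono sum_spins_le assms) auto
  also have "\<dots> = 2 ^ n1 * 2 ^ n2 * (\<Sum>j = - int n1..int n1. \<Sum>k = - int n2..int n2.
                  ?e1 j * ?e2 k * H (of_int j) (of_int k))"
    by (simp add: sum_distrib_left sum.swap[of _ "{- int n2..int n2}"] mult_ac)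
  finally show ?thesis .
qed

lemma quadratic_form_nonneg:
  fixes a b c u v :: real
  assumes "a > 0" "b\<^sup>2 \<le> a * c"
  shows "0 \<le> a * u\<^sup>2 + c * v\<^sup>2 - 2 * b * u * v"
proof -
  have "a * (a * u\<^sup>2 + c * v\<^sup>2 - 2 * b * u * v) = (a * u - b * v)\<^sup>2 + (a * c - b\<^sup>2) * v\<^sup>2"
    by (simp add: algebra_simps power2_eq_square)
  also have "\<dots> \<ge> 0" using assms by simp
  finally show ?thesis using assms(1) by (simp add: zero_le_mult_iff)
qed

lemma cw_weight_pos: "cw_weight J1 J2 Jb N n1 n2 xy > 0"
  by (simp add: cw_weight_def Let_def)

lemma cw_weight_ge_1:
  assumes "J1 > 0" "Jb\<^sup>2 \<le> J1 * J2"
  shows "1 \<le> cw_weight J1 J2 Jb N n1 n2 xy"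
proof -
  have "0 \<le> J1 * s\<^sup>2 + J2 * t\<^sup>2 - 2 * (- Jb) * s * t" for s t
    by (rule quadratic_form_nonneg) (use assms in auto)
  then show ?thesis by (simp add: cw_weight_def Let_def)
qed

lemma cw_Z_pos: "cw_Z J1 J2 Jb N n1 n2 > 0"
  unfolding cw_Z_def by (intro sum_pos) (auto simp: cw_weight_pos)

lemma cw_Z_ge:
  assumes "J1 > 0" "Jb\<^sup>2 \<le> J1 * J2"
  shows "2 ^ n1 * 2 ^ n2 \<le> cw_Z J1 J2 Jb N n1 n2"
proof -
  have "(2::real) ^ n1 * 2 ^ n2 = (\<Sum>xy\<in>spins n1 \<times> spins n2. 1)"
    by (simp add: card_cartesian_product card_spins)
  also have "\<dots> \<le> cw_Z J1 J2 Jb N n1 n2"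
    unfolding cw_Z_def by (intro sum_mono cw_weight_ge_1 assms)
  finally show ?thesis .
qed

lemma pmf_cw_pmf:
  "pmf (cw_pmf J1 J2 Jb N n1 n2) xy =
     (if xy \<in> spins n1 \<times> spins n2 then cw_weight J1 J2 Jb N n1 n2 xy / cw_Z J1 J2 Jb N n1 n2 else 0)"
  unfolding cw_pmf_def
proof (rule pmf_embed_pmf)
  let ?\<Omega> = "spins n1 \<times> spins n2"
  let ?g = "\<lambda>xy. if xy \<in> ?\<Omega> then cw_weight J1 J2 Jb N n1 n2 xy / cw_Z J1 J2 Jb N n1 n2 else 0"
  show "?g xy \<ge> 0" for xy
    using cw_weight_pos cw_Z_pos by (simp add: less_imp_le)
  have "(\<integral>\<^sup>+xy. ennreal (?g xy) \<partial>count_space UNIV) = (\<Sum>xy\<in>?\<Omega>. ennreal (?g xy))"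
    by (rule nn_integral_count_space') auto
  also have "\<dots> = ennreal ((\<Sum>xy\<in>?\<Omega>. cw_weight J1 J2 Jb N n1 n2 xy) / cw_Z J1 J2 Jb N n1 n2)"
    using cw_weight_pos cw_Z_pos by (simp add: sum_divide_distrib less_imp_le)
  also have "\<dots> = 1"
    using cw_Z_pos[of J1 J2 Jb N n1 n2] by (simp add: cw_Z_def)
  finally show "(\<integral>\<^sup>+xy. ennreal (?g xy) \<partial>count_space UNIV) = 1" .
qed

lemma prob_cw_pmf:
  "measure_pmf.prob (cw_pmf J1 J2 Jb N n1 n2) A =
     (\<Sum>xy\<in>(spins n1 \<times> spins n2) \<inter> A. cw_weight J1 J2 Jb N n1 n2 xy) / cw_Z J1 J2 Jb N n1 n2"
proof -
  let ?p = "cw_pmf J1 J2 Jb N n1 n2"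
  have "set_pmf ?p = spins n1 \<times> spins n2"
    using cw_weight_pos cw_Z_pos by (auto simp: set_pmf_eq pmf_cw_pmf less_imp_neq[symmetric])
  then have "measure_pmf.prob ?p A = measure_pmf.prob ?p ((spins n1 \<times> spins n2) \<inter> A)"
    by (metis Int_commute measure_Int_set_pmf)
  also have "\<dots> = (\<Sum>xy\<in>(spins n1 \<times> spins n2) \<inter> A. pmf ?p xy)"
    by (simp add: measure_measure_pmf_finite)
  finally show ?thesis
    by (simp add: pmf_cw_pmf sum_divide_distrib)
qed

lemma cw_pmf_tail_le:
  fixes n1 n2 N :: nat and \<epsilon> D :: real
  assumes "n1 > 0" "n2 > 0" "N > 0" "\<epsilon> > 0" "J1 > 0" "Jb\<^sup>2 \<le> J1 * J2"
    and coercive: "\<And>u v. \<epsilon> * (u\<^sup>2 + v\<^sup>2) \<le> (N / n1 - J1) * u\<^sup>2 + (N / n2 - J2) * v\<^sup>2 - 2 * Jb * u * v"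
  shows "measure_pmf.prob (cw_pmf J1 J2 Jb N n1 n2)
           {xy. D \<le> (\<Sum>i<n1. fst xy i)\<^sup>2 + (\<Sum>j<n2. snd xy j)\<^sup>2}
         \<le> (2 * real n1 + 1) * (2 * real n2 + 1) * exp (- \<epsilon> * D / (2 * N))"
proof -
  define H where "H = (\<lambda>s t. if D \<le> s\<^sup>2 + t\<^sup>2
    then exp ((J1 * s\<^sup>2 + J2 * t\<^sup>2 + 2 * Jb * s * t) / (2 * real N)) else 0)"
  let ?\<Omega> = "spins n1 \<times> spins n2" and ?Z = "cw_Z J1 J2 Jb N n1 n2"
  have gauss_H_le: "exp (- s\<^sup>2 / (2 * n1)) * exp (- t\<^sup>2 / (2 * n2)) * H s t \<le> exp (- \<epsilon> * D / (2 * N))"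
    for s t
  proof (cases "D \<le> s\<^sup>2 + t\<^sup>2")
    case True
    have "- s\<^sup>2 / (2 * n1) + - t\<^sup>2 / (2 * n2) + (J1 * s\<^sup>2 + J2 * t\<^sup>2 + 2 * Jb * s * t) / (2 * N) =
        - (N / 2) * ((N / n1 - J1) * (s / N)\<^sup>2 + (N / n2 - J2) * (t / N)\<^sup>2 - 2 * Jb * (s / N) * (t / N))"
      using assms(1-3) by (simp add: field_simps power2_eq_square)
    also have "\<dots> \<le> - (N / 2) * (\<epsilon> * ((s / N)\<^sup>2 + (t / N)\<^sup>2))"
      using coercive[of "s / N" "t / N"] by (intro mult_left_mono_neg) auto
    also have "\<dots> = - \<epsilon> * (s\<^sup>2 + t\<^sup>2) / (2 * N)"
      using assms(3) by (simp add: field_simps power2_eq_square)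
    also have "\<dots> \<le> - \<epsilon> * D / (2 * N)"
      using True assms(4) by (intro divide_right_mono) auto
    finally show ?thesis
      using True by (simp add: H_def flip: exp_add)
  qed (simp add: H_def)
  have "measure_pmf.prob (cw_pmf J1 J2 Jb N n1 n2)
           {xy. D \<le> (\<Sum>i<n1. fst xy i)\<^sup>2 + (\<Sum>j<n2. snd xy j)\<^sup>2}
      = (\<Sum>xy\<in>?\<Omega>. H (\<Sum>i<n1. fst xy i) (\<Sum>j<n2. snd xy j)) / ?Z"
    by (simp add: prob_cw_pmf sum.inter_restrict H_def cw_weight_def Let_def)
  also have "\<dots> \<le> (\<Sum>xy\<in>?\<Omega>. H (\<Sum>i<n1. fst xy i) (\<Sum>j<n2. snd xy j)) / (2 ^ n1 * 2 ^ n2)"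
    by (intro divide_left_mono sum_nonneg cw_Z_ge assms(5,6)) (auto simp: H_def cw_Z_pos)
  also have "\<dots> \<le> (\<Sum>j = - int n1..int n1. \<Sum>k = - int n2..int n2.
        exp (- (of_int j)\<^sup>2 / (2 * n1)) * exp (- (of_int k)\<^sup>2 / (2 * n2)) * H (of_int j) (of_int k))"
    using sum_spins_pair_le[of n1 n2 H] assms(1,2) by (simp add: H_def field_simps)
  also have "\<dots> \<le> (\<Sum>j = - int n1..int n1. \<Sum>k = - int n2..int n2. exp (- \<epsilon> * D / (2 * N)))"
    by (intro sum_mono gauss_H_le)
  also have "\<dots> = (2 * real n1 + 1) * (2 * real n2 + 1) * exp (- \<epsilon> * D / (2 * N))"
    by (simp add: algebra_simps)
  finally show ?thesis .
qed

lemma cw_magn_law_tail_le: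
  fixes n1 n2 N :: nat and \<epsilon> \<beta> r :: real
  assumes "n1 > 0" "n2 > 0" "n1 + n2 \<le> N" "\<epsilon> > 0" "J1 > 0" "Jb\<^sup>2 \<le> J1 * J2"
    and coercive: "\<And>u v. \<epsilon> * (u\<^sup>2 + v\<^sup>2) \<le> (N / n1 - J1) * u\<^sup>2 + (N / n2 - J2) * v\<^sup>2 - 2 * Jb * u * v"
    and \<beta>: "0 \<le> \<beta>" "\<beta> * N \<le> n1" "\<beta> * N \<le> n2" and "0 \<le> r"
  shows "measure_pmf.prob (cw_magn_law J1 J2 Jb N n1 n2) {z. r \<le> norm z}
         \<le> (2 * real N + 1)\<^sup>2 * exp (- (\<epsilon> * (\<beta> * r)\<^sup>2 / 2) * N)"
proof -
  define D where "D = (\<beta> * N * r)\<^sup>2"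
  have N: "N > 0" using assms(1,3) by simp
  have D_le: "D \<le> s\<^sup>2 + t\<^sup>2" if "r \<le> norm (s / n1, t / n2)" for s t :: real
  proof -
    have "r\<^sup>2 \<le> (norm (s / n1, t / n2))\<^sup>2"
      using that \<open>0 \<le> r\<close> by (rule power_mono)
    then have "r\<^sup>2 \<le> (s / n1)\<^sup>2 + (t / n2)\<^sup>2"
      by (simp add: norm_Pair power_divide)
    then have "D \<le> (\<beta> * N)\<^sup>2 * ((s / n1)\<^sup>2 + (t / n2)\<^sup>2)"
      unfolding D_def power_mult_distrib by (intro mult_left_mono) auto
    also have "\<dots> \<le> n1\<^sup>2 * (s / n1)\<^sup>2 + n2\<^sup>2 * (t / n2)\<^sup>2"
      using \<beta> by (simp add: distrib_left add_mono mult_right_mono power_mono)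
    also have "\<dots> = s\<^sup>2 + t\<^sup>2"
      using assms(1,2) by (simp add: power_divide)
    finally show ?thesis .
  qed
  have "measure_pmf.prob (cw_magn_law J1 J2 Jb N n1 n2) {z. r \<le> norm z}
      \<le> measure_pmf.prob (cw_pmf J1 J2 Jb N n1 n2)
           {xy. D \<le> (\<Sum>i<n1. fst xy i)\<^sup>2 + (\<Sum>j<n2. snd xy j)\<^sup>2}"
    unfolding cw_magn_law_def measure_map_pmf
    by (intro measure_pmf.finite_measure_mono) (auto simp: D_le)
  also have "\<dots> \<le> (2 * real n1 + 1) * (2 * real n2 + 1) * exp (- \<epsilon> * D / (2 * N))"
    by (rule cw_pmf_tail_le[OF assms(1,2) N assms(4-6) coercive])
  also have "\<dots> \<le> (2 * real N + 1)\<^sup>2 * exp (- \<epsilon> * D / (2 * N))"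
    unfolding power2_eq_square using assms(3) by (intro mult_right_mono mult_mono) auto
  also have "- \<epsilon> * D / (2 * N) = - (\<epsilon> * (\<beta> * r)\<^sup>2 / 2) * N"
    using N by (simp add: D_def power2_eq_square field_simps)
  finally show ?thesis .
qed

lemma integrable_measure_pmf_bounded:
  fixes g :: "'a \<Rightarrow> real"
  assumes "\<And>z. \<bar>g z\<bar> \<le> C"
  shows "integrable (measure_pmf p) g"
  using assms by (intro measure_pmf.integrable_const_bound[where B = C]) auto

lemma abs_integral_diff_le_prob_far:
  fixes f :: "'a::metric_space \<Rightarrow> real" and p :: "'a pmf"
  assumes bounded: "\<And>z. \<bar>f z\<bar> \<le> B" and near: "\<And>z. dist z a < d \<Longrightarrow> \<bar>f z - f a\<bar> \<le> \<eta>"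
    and "\<eta> \<ge> 0"
  shows "\<bar>integral\<^sup>L p f - f a\<bar> \<le> \<eta> + 2 * B * measure_pmf.prob p {z. d \<le> dist z a}"
proof -
  let ?far = "{z. d \<le> dist z a}"
  have "B \<ge> 0" using bounded[of a] by simp
  have diff_le: "\<bar>f z - f a\<bar> \<le> 2 * B" for z
    using bounded[of z] bounded[of a] by linarith
  have "integrable p f"
    using bounded by (rule integrable_measure_pmf_bounded)
  then have "\<bar>integral\<^sup>L p f - f a\<bar> = \<bar>integral\<^sup>L p (\<lambda>z. f z - f a)\<bar>"
    by simp
  also have "\<dots> \<le> integral\<^sup>L p (\<lambda>z. \<bar>f z - f a\<bar>)"
    by (rule integral_abs_bound)
  also have "\<dots> \<le> integral\<^sup>L p (\<lambda>z. \<eta> + 2 * B * indicator ?far z)"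
  proof (rule integral_mono)
    show "integrable p (\<lambda>z. \<bar>f z - f a\<bar>)"
      by (rule integrable_measure_pmf_bounded[where C = "2 * B"]) (simp add: diff_le)
    show "integrable p (\<lambda>z. \<eta> + 2 * B * indicator ?far z)"
      by (rule integrable_measure_pmf_bounded[where C = "\<eta> + 2 * B"])
        (use \<open>\<eta> \<ge> 0\<close> \<open>B \<ge> 0\<close> in \<open>simp add: indicator_def\<close>)
    show "\<bar>f z - f a\<bar> \<le> \<eta> + 2 * B * indicator ?far z" for z
      using near[of z] diff_le[of z] \<open>\<eta> \<ge> 0\<close> by (cases "z \<in> ?far") auto
  qed
  also have "\<dots> = \<eta> + 2 * B * measure_pmf.prob p ?far"
  proof -
    have "integrable p (\<lambda>z. 2 * B * indicator ?far z)"
      by (rule integrable_measure_pmf_bounded[where C = "2 * B"])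
        (use \<open>B \<ge> 0\<close> in \<open>simp add: indicator_def\<close>)
    then show ?thesis by simp
  qed
  finally show ?thesis .
qed

lemma weak_conv_R2_return_pmfI:
  fixes \<mu> :: "nat \<Rightarrow> (real \<times> real) pmf" and a :: "real \<times> real"
  assumes concentrated: "\<And>r. r > 0 \<Longrightarrow> (\<lambda>n. measure_pmf.prob (\<mu> n) {z. r \<le> dist z a}) \<longlonglongrightarrow> 0"
  shows "weak_conv_R2 (\<lambda>n. measure_pmf (\<mu> n)) (measure_pmf (return_pmf a))"
  unfolding weak_conv_R2_def
proof (intro allI impI)
  fix f :: "real \<times> real \<Rightarrow> real"
  assume "continuous_on UNIV f \<and> bounded (range f)"
  then obtain B where B: "\<And>z. \<bar>f z\<bar> \<le> B" and cont: "isCont f a"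
    by (auto simp: bounded_iff continuous_on_eq_continuous_at simp del: split_paired_All)
  have "B \<ge> 0" using B[of a] by simp
  have return: "integral\<^sup>L (return_pmf a) f = f a"
    by (subst integral_measure_pmf[of "{a}"]) auto
  show "(\<lambda>n. integral\<^sup>L (\<mu> n) f) \<longlonglongrightarrow> integral\<^sup>L (return_pmf a) f"
    unfolding return tendsto_iff dist_real_def
  proof (intro allI impI)
    fix \<eta> :: real assume "\<eta> > 0"
    then obtain d where "d > 0" and d: "\<And>z. dist z a < d \<Longrightarrow> \<bar>f z - f a\<bar> < \<eta> / 2"
      using cont unfolding continuous_at_eps_delta dist_real_def by (metis half_gt_zero)
    have "\<eta> / (2 * (2 * B + 1)) > 0" using \<open>\<eta> > 0\<close> \<open>B \<ge> 0\<close> by simp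
    with concentrated[OF \<open>d > 0\<close>]
    have "\<forall>\<^sub>F n in sequentially. measure_pmf.prob (\<mu> n) {z. d \<le> dist z a} < \<eta> / (2 * (2 * B + 1))"
      by (rule order_tendstoD(2))
    then show "\<forall>\<^sub>F n in sequentially. \<bar>integral\<^sup>L (\<mu> n) f - f a\<bar> < \<eta>"
    proof eventually_elim
      case (elim n)
      have "\<bar>integral\<^sup>L (\<mu> n) f - f a\<bar> \<le> \<eta> / 2 + 2 * B * measure_pmf.prob (\<mu> n) {z. d \<le> dist z a}"
        using B d \<open>\<eta> > 0\<close> by (intro abs_integral_diff_le_prob_far) (auto intro: less_imp_le)
      also have "\<dots> \<le> \<eta> / 2 + 2 * B * (\<eta> / (2 * (2 * B + 1)))"
        using elim \<open>B \<ge> 0\<close> by (intro add_left_mono mult_left_mono) auto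
      also have "\<dots> < \<eta>"
        using \<open>\<eta> > 0\<close> \<open>B \<ge> 0\<close> by (simp add: field_simps)
      finally show ?case .
    qed
  qed
qed

lemma quadratic_form_coercive_near:
  fixes P R b :: real
  assumes "P > 0" "b\<^sup>2 < P * R"
  obtains \<epsilon> where "\<epsilon> > 0"
    and "\<And>p r u v. P - \<epsilon> < p \<Longrightarrow> R - \<epsilon> < r \<Longrightarrow> \<epsilon> * (u\<^sup>2 + v\<^sup>2) \<le> p * u\<^sup>2 + r * v\<^sup>2 - 2 * b * u * v"
proof -
  have "((\<lambda>\<epsilon>. P - 2 * \<epsilon>) \<longlongrightarrow> P) (at_right 0)"
    and "((\<lambda>\<epsilon>. (P - 2 * \<epsilon>) * (R - 2 * \<epsilon>)) \<longlongrightarrow> P * R) (at_right 0)"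
    by (auto intro!: tendsto_eq_intros)
  from this[THEN order_tendstoD(1)] assms
  have "\<forall>\<^sub>F \<epsilon> in at_right 0. 0 < P - 2 * \<epsilon>"
    and "\<forall>\<^sub>F \<epsilon> in at_right 0. b\<^sup>2 < (P - 2 * \<epsilon>) * (R - 2 * \<epsilon>)"
    by blast+
  moreover have "\<forall>\<^sub>F \<epsilon> in at_right 0. 0 < (\<epsilon>::real)"
    by (simp add: eventually_at_right_less)
  ultimately have "\<forall>\<^sub>F \<epsilon> in at_right 0. 0 < \<epsilon> \<and> 0 < P - 2 * \<epsilon> \<and> b\<^sup>2 < (P - 2 * \<epsilon>) * (R - 2 * \<epsilon>)"
    by eventually_elim auto
  then obtain \<epsilon> where \<epsilon>: "0 < \<epsilon>" "0 < P - 2 * \<epsilon>" "b\<^sup>2 < (P - 2 * \<epsilon>) * (R - 2 * \<epsilon>)"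
    using eventually_happens trivial_limit_at_right_real by blast
  show thesis
  proof (rule that[OF \<open>0 < \<epsilon>\<close>])
    fix p r u v :: real
    assume "P - \<epsilon> < p" "R - \<epsilon> < r"
    have "0 < R - 2 * \<epsilon>"
      using \<epsilon> by (metis zero_less_mult_pos zero_le_power2 le_less_trans)
    have "b\<^sup>2 < (P - 2 * \<epsilon>) * (R - 2 * \<epsilon>)" by (fact \<epsilon>)
    also have "\<dots> \<le> (p - \<epsilon>) * (r - \<epsilon>)"
      using \<epsilon> \<open>0 < R - 2 * \<epsilon>\<close> \<open>P - \<epsilon> < p\<close> \<open>R - \<epsilon> < r\<close> by (intro mult_mono) auto
    finally have "b\<^sup>2 \<le> (p - \<epsilon>) * (r - \<epsilon>)" by simp
    from quadratic_form_nonneg[OF _ this, of u v] \<epsilon> \<open>P - \<epsilon> < p\<close>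
    show "\<epsilon> * (u\<^sup>2 + v\<^sup>2) \<le> p * u\<^sup>2 + r * v\<^sup>2 - 2 * b * u * v"
      by (simp add: algebra_simps)
  qed
qed

lemma eventually_size_ratio_bounds:
  fixes n :: "nat \<Rightarrow> nat"
  assumes "(\<lambda>N. real (n N) / real N) \<longlonglongrightarrow> \<alpha>" "\<alpha> > 0" "\<epsilon> > 0"
  shows "\<forall>\<^sub>F N in sequentially. 1 / \<alpha> - \<epsilon> < real N / real (n N) \<and> \<alpha> / 2 * N \<le> n N"
proof -
  have "(\<lambda>N. real N / real (n N)) \<longlonglongrightarrow> 1 / \<alpha>"
    using tendsto_inverse[OF assms(1)] assms(2) by (simp add: inverse_eq_divide)
  then have "\<forall>\<^sub>F N in sequentially. 1 / \<alpha> - \<epsilon> < real N / real (n N)"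
    by (rule order_tendstoD(1)) (use assms(3) in simp)
  moreover have "\<forall>\<^sub>F N in sequentially. \<alpha> / 2 < real (n N) / real N"
    by (rule order_tendstoD(1)[OF assms(1)]) (use assms(2) in simp)
  ultimately show ?thesis
    by eventually_elim (use assms(2) in \<open>auto simp: less_divide_eq split: if_splits\<close>)
qed

lemma cw_magn_law_weak_conv_0:
  fixes n1 n2 :: "nat \<Rightarrow> nat" and \<epsilon> \<beta> :: real
  assumes "\<epsilon> > 0" "\<beta> > 0" "J1 > 0" "Jb\<^sup>2 \<le> J1 * J2"
    and eventually_coercive: "\<forall>\<^sub>F N in sequentially. 0 < n1 N \<and> 0 < n2 N \<and> n1 N + n2 N \<le> N
      \<and> \<beta> * N \<le> n1 N \<and> \<beta> * N \<le> n2 N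
      \<and> (\<forall>u v. \<epsilon> * (u\<^sup>2 + v\<^sup>2) \<le> (N / n1 N - J1) * u\<^sup>2 + (N / n2 N - J2) * v\<^sup>2 - 2 * Jb * u * v)"
  shows "weak_conv_R2 (\<lambda>N. measure_pmf (cw_magn_law J1 J2 Jb N (n1 N) (n2 N)))
           (measure_pmf (return_pmf (0, 0)))"
proof (rule weak_conv_R2_return_pmfI)
  fix r :: real
  assume "r > 0"
  define c where "c = \<epsilon> * (\<beta> * r)\<^sup>2 / 2"
  have "c > 0" using assms(1,2) \<open>r > 0\<close> by (simp add: c_def)
  then have "(\<lambda>N. (2 * real N + 1)\<^sup>2 * exp (- c * N)) \<longlonglongrightarrow> 0"
    by real_asymp
  moreover have "\<forall>\<^sub>F N in sequentially.
      measure_pmf.prob (cw_magn_law J1 J2 Jb N (n1 N) (n2 N)) {z. r \<le> norm z}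
        \<le> (2 * real N + 1)\<^sup>2 * exp (- c * N)"
    using eventually_coercive unfolding c_def
    by eventually_elim (intro cw_magn_law_tail_le; use assms \<open>r > 0\<close> in auto)
  ultimately show "(\<lambda>N. measure_pmf.prob (cw_magn_law J1 J2 Jb N (n1 N) (n2 N))
      {z. r \<le> dist z (0, 0)}) \<longlonglongrightarrow> 0"
    by (simp add: dist_norm zero_prod_def[symmetric])
      (rule tendsto_sandwich[OF always_eventually _ tendsto_const]; simp)
qed

theorem theorem1:
  fixes N1 N2 :: "nat \<Rightarrow> nat" and J1 J2 Jb \<alpha>1 \<alpha>2 :: real
  assumes sizes: "\<forall>\<^sub>F N in sequentially. 0 < N1 N \<and> 0 < N2 N \<and> N1 N + N2 N \<le> N"
    and N1_inf: "filterlim N1 at_top sequentially"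
    and N2_inf: "filterlim N2 at_top sequentially"
    and \<alpha>1_lim: "(\<lambda>N. real (N1 N) / real N) \<longlonglongrightarrow> \<alpha>1"
    and \<alpha>2_lim: "(\<lambda>N. real (N2 N) / real N) \<longlonglongrightarrow> \<alpha>2"
    and \<alpha>_pos: "\<alpha>1 > 0" "\<alpha>2 > 0"
    and J_pos: "J1 > 0" "J2 > 0" "Jb > 0"
    and J_pd: "J1 * J2 - Jb\<^sup>2 > 0"
    and high_temp: "J1 < 1 / \<alpha>1" "J2 < 1 / \<alpha>2" "Jb\<^sup>2 < (1 / \<alpha>1 - J1) * (1 / \<alpha>2 - J2)"
  shows "weak_conv_R2 (\<lambda>N. measure_pmf (cw_magn_law J1 J2 Jb N (N1 N) (N2 N)))
           (measure_pmf (return_pmf (0, 0)))"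
proof -
  obtain \<epsilon> where "\<epsilon> > 0" and coercive: "\<And>p r u v. 1 / \<alpha>1 - J1 - \<epsilon> < p \<Longrightarrow> 1 / \<alpha>2 - J2 - \<epsilon> < r \<Longrightarrow>
      \<epsilon> * (u\<^sup>2 + v\<^sup>2) \<le> p * u\<^sup>2 + r * v\<^sup>2 - 2 * Jb * u * v"
    using quadratic_form_coercive_near[of "1 / \<alpha>1 - J1" Jb "1 / \<alpha>2 - J2"] high_temp by auto
  define \<beta> where "\<beta> = min \<alpha>1 \<alpha>2 / 2"
  have "\<beta> > 0" using \<alpha>_pos by (simp add: \<beta>_def)
  from sizes eventually_size_ratio_bounds[OF \<alpha>1_lim \<alpha>_pos(1) \<open>\<epsilon> > 0\<close>]
    eventually_size_ratio_bounds[OF \<alpha>2_lim \<alpha>_pos(2) \<open>\<epsilon> > 0\<close>]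
  have "\<forall>\<^sub>F N in sequentially. 0 < N1 N \<and> 0 < N2 N \<and> N1 N + N2 N \<le> N
      \<and> \<beta> * N \<le> N1 N \<and> \<beta> * N \<le> N2 N
      \<and> (\<forall>u v. \<epsilon> * (u\<^sup>2 + v\<^sup>2) \<le> (N / N1 N - J1) * u\<^sup>2 + (N / N2 N - J2) * v\<^sup>2 - 2 * Jb * u * v)"
  proof eventually_elim
    case (elim N)
    have "\<beta> * N \<le> \<alpha>1 / 2 * N" "\<beta> * N \<le> \<alpha>2 / 2 * N"
      by (intro mult_right_mono; simp add: \<beta>_def)+
    with elim have "\<beta> * N \<le> N1 N" "\<beta> * N \<le> N2 N"
      by linarith+
    with elim show ?case
      by (auto intro!: coercive)
  qed
  then show ?thesis
    using J_pd by (intro cw_magn_law_weak_conv_0[OF \<open>\<epsilon> > 0\<close> \<open>\<beta> > 0\<close> J_pos(1)]) auto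
qed

end
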